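(* Let $1\le S\le N$ and $\mathcal{A}=\{A\subseteq\{1,\dots,N\}:|A|\le S\}$. Let $X_1,\dots,X_N$ be i.i.d. random variables taking values $H$ and $L$, $H>L>0$, with probabilities $p\in(0,1)$ and $1-p$. Then for every $r>1$, $$\sup\{\mathrm{ELR}(\tilde\pi^o): 0<L<H\le rL,\ p\in(0,1)\}\le \frac{S}{S+N},$$ and $$\sup\{\mathrm{ELR}(\tilde\pi^o): 0<L<H,\ p\in(0,1)\}=\frac{S}{S+N}.$$
   Context: This models an auction of $S$ identical items among $N$ unit-demand buyers with values $X_n$ (independent). An allocation rule $\pi$ maps each bid vector $v\in\{L,H\}^N$ to a probability distribution $(\pi_A(v))_{A\in\mathcal{A}}$ on $\mathcal{A}$; $Q_n(v)=\sum_{A\ni n}\pi_A(v)$. The (monotone) virtual valuation is $\overline{w}(H)=H$, $\overline{w}(L)=(L-pH)/(1-p)$. An allocation rule is optimal (the allocation rule of a revenue-maximizing Bayesian incentive compatible, individually rational mechanism) if for every $v$, $\pi(v)$ is supported on $\arg\max_{A\in\mathcal{A}}\sum_{n\in A}\overline{w}(v_n)$. $\tilde\pi^o$ denotes an optimal allocation rule maximizing realized welfare $\mathbb{E}[\sum_nQ_n(X)X_n]$ among optimal allocation rules. $\mathrm{MSW}=\mathbb{E}[\max_{A\in\mathcal{A}}\sum_{n\in A}X_n]$ and $\mathrm{ELR}(\pi)=(\mathrm{MSW}-\mathbb{E}[\sum_nQ_n(X)X_n])/\mathrm{MSW}$. *)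

theory Defs
  imports Complex_Main "HOL-Library.FuncSet"
begin

definition bids :: "nat \<Rightarrow> real \<Rightarrow> real \<Rightarrow> (nat \<Rightarrow> real) set" where
  "bids N L H = PiE {1..N} (\<lambda>_. {L, H})"

definition feas :: "nat \<Rightarrow> nat \<Rightarrow> nat set set" where
  "feas N S = {A. A \<subseteq> {1..N} \<and> card A \<le> S}"

definition vprob :: "nat \<Rightarrow> real \<Rightarrow> real \<Rightarrow> (nat \<Rightarrow> real) \<Rightarrow> real" where
  "vprob N H p v = (\<Prod>n\<in>{1..N}. if v n = H then p else 1 - p)"

definition expect :: "nat \<Rightarrow> real \<Rightarrow> real \<Rightarrow> real \<Rightarrow> ((nat \<Rightarrow> real) \<Rightarrow> real) \<Rightarrow> real" where
  "expect N L H p f = (\<Sum>v\<in>bids N L H. vprob N H p v * f v)"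

definition vval :: "real \<Rightarrow> real \<Rightarrow> real \<Rightarrow> real \<Rightarrow> real" where
  "vval L H p x = (if x = H then H else (L - p * H) / (1 - p))"

definition is_alloc :: "nat \<Rightarrow> nat \<Rightarrow> real \<Rightarrow> real \<Rightarrow> ((nat \<Rightarrow> real) \<Rightarrow> nat set \<Rightarrow> real) \<Rightarrow> bool" where
  "is_alloc N S L H \<pi> \<longleftrightarrow>
     (\<forall>v\<in>bids N L H. (\<forall>A\<in>feas N S. 0 \<le> \<pi> v A) \<and> (\<Sum>A\<in>feas N S. \<pi> v A) = 1)"

definition Qn :: "nat \<Rightarrow> nat \<Rightarrow> ((nat \<Rightarrow> real) \<Rightarrow> nat set \<Rightarrow> real) \<Rightarrow> nat \<Rightarrow> (nat \<Rightarrow> real) \<Rightarrow> real" where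
  "Qn N S \<pi> n v = (\<Sum>A\<in>{A\<in>feas N S. n \<in> A}. \<pi> v A)"

definition welfare :: "nat \<Rightarrow> nat \<Rightarrow> real \<Rightarrow> real \<Rightarrow> real \<Rightarrow> ((nat \<Rightarrow> real) \<Rightarrow> nat set \<Rightarrow> real) \<Rightarrow> real" where
  "welfare N S L H p \<pi> = expect N L H p (\<lambda>v. \<Sum>n\<in>{1..N}. Qn N S \<pi> n v * v n)"

definition MSW :: "nat \<Rightarrow> nat \<Rightarrow> real \<Rightarrow> real \<Rightarrow> real \<Rightarrow> real" where
  "MSW N S L H p = expect N L H p (\<lambda>v. Max ((\<lambda>A. \<Sum>n\<in>A. v n) ` feas N S))"

definition ELR :: "nat \<Rightarrow> nat \<Rightarrow> real \<Rightarrow> real \<Rightarrow> real \<Rightarrow> ((nat \<Rightarrow> real) \<Rightarrow> nat set \<Rightarrow> real) \<Rightarrow> real" where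
  "ELR N S L H p \<pi> = (MSW N S L H p - welfare N S L H p \<pi>) / MSW N S L H p"

definition optimal :: "nat \<Rightarrow> nat \<Rightarrow> real \<Rightarrow> real \<Rightarrow> real \<Rightarrow> ((nat \<Rightarrow> real) \<Rightarrow> nat set \<Rightarrow> real) \<Rightarrow> bool" where
  "optimal N S L H p \<pi> \<longleftrightarrow> is_alloc N S L H \<pi> \<and>
     (\<forall>v\<in>bids N L H. \<forall>A\<in>feas N S. \<pi> v A \<noteq> 0 \<longrightarrow>
        (\<forall>B\<in>feas N S. (\<Sum>n\<in>B. vval L H p (v n)) \<le> (\<Sum>n\<in>A. vval L H p (v n))))"

definition welfare_max_optimal :: "nat \<Rightarrow> nat \<Rightarrow> real \<Rightarrow> real \<Rightarrow> real \<Rightarrow> ((nat \<Rightarrow> real) \<Rightarrow> nat set \<Rightarrow> real) \<Rightarrow> bool" where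
  "welfare_max_optimal N S L H p \<pi> \<longleftrightarrow> optimal N S L H p \<pi> \<and>
     (\<forall>\<pi>'. optimal N S L H p \<pi>' \<longrightarrow> welfare N S L H p \<pi>' \<le> welfare N S L H p \<pi>)"

end

theory Submission
  imports Defs
begin

text \<open>Let \<open>K ~ Bin(N, p)\<close> count the high bidders and \<open>M = E[min K S]\<close>, so that
  \<open>MSW = H M + L (S - M)\<close>. If \<open>p H \<le> L\<close>, the virtual value of \<open>L\<close> is nonnegative, the
  efficient allocation is optimal and the welfare-maximal optimal rule loses nothing. If
  \<open>p H > L\<close>, every optimal rule sells only to high bidders, so the loss ratio is
  \<open>L (S - M) / (H M + L (S - M))\<close>; size-biasing and Jensen's inequality give
  \<open>M \<ge> N p S / (S + N p)\<close>, which together with \<open>L < p H\<close> bounds the ratio by \<open>S / (S + N)\<close>.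
  For \<open>L = 1\<close>, \<open>H = 1 + 1/p\<close> the ratio is at least \<open>S (1 - p)^N / ((1 + p) N + S (1 - p)^N)\<close>,
  which tends to \<open>S / (S + N)\<close> as \<open>p \<rightarrow> 0\<close>.\<close>

definition binomial_weight :: "nat \<Rightarrow> real \<Rightarrow> nat \<Rightarrow> real" where
  "binomial_weight n p k = real (n choose k) * p ^ k * (1 - p) ^ (n - k)"

lemma binomial_weight_nonneg: "0 \<le> p \<Longrightarrow> p \<le> 1 \<Longrightarrow> 0 \<le> binomial_weight n p k"
  unfolding binomial_weight_def by simp

lemma sum_binomial_weight: "(\<Sum>k\<le>n. binomial_weight n p k) = 1"
  using binomial_ring[of p "1 - p" n] by (simp add: binomial_weight_def)

lemma binomial_weight_size_bias:
  "(\<Sum>k\<le>Suc n. binomial_weight (Suc n) p k * real k * h k)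
     = real (Suc n) * p * (\<Sum>j\<le>n. binomial_weight n p j * h (Suc j))"
proof -
  have shifted: "binomial_weight (Suc n) p (Suc j) * real (Suc j) * h (Suc j)
      = real (Suc n) * p * (binomial_weight n p j * h (Suc j))" for j
  proof -
    have "real (Suc n choose Suc j) * real (Suc j) = real (Suc n) * real (n choose j)"
      using Suc_times_binomial_eq[of n j] by (metis of_nat_mult)
    then show ?thesis
      unfolding binomial_weight_def by (simp add: ac_simps)
  qed
  have "(\<Sum>k\<le>Suc n. binomial_weight (Suc n) p k * real k * h k)
      = (\<Sum>j\<le>n. binomial_weight (Suc n) p (Suc j) * real (Suc j) * h (Suc j))"
    by (subst sum.atMost_Suc_shift) simp
  also have "\<dots> = real (Suc n) * p * (\<Sum>j\<le>n. binomial_weight n p j * h (Suc j))"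
    unfolding shifted by (simp add: sum_distrib_left)
  finally show ?thesis .
qed

lemma binomial_weight_mean: "(\<Sum>k\<le>n. binomial_weight n p k * real k) = real n * p"
proof (cases n)
  case (Suc m)
  then show ?thesis
    using binomial_weight_size_bias[of m p "\<lambda>_. 1"] sum_binomial_weight[of m p] by simp
qed simp

lemma inverse_ge_tangent_line:
  fixes x a :: real
  assumes "0 < x" "0 < a"
  shows "2 / a - x / a\<^sup>2 \<le> 1 / x"
proof -
  have "2 * a * x - x\<^sup>2 \<le> a\<^sup>2"
    using zero_le_power2[of "a - x"] by (simp add: power2_eq_square algebra_simps)
  then show ?thesis
    using assms by (simp add: field_simps power2_eq_square)
qed

text \<open>Jensen's inequality for the convex function \<open>1 / (a + k)\<close>, via its tangent line at the mean.\<close>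
lemma binomial_weight_inverse_jensen:
  assumes "0 < a" "0 \<le> p" "p \<le> 1"
  shows "1 / (a + real n * p) \<le> (\<Sum>j\<le>n. binomial_weight n p j / (a + real j))"
proof -
  define c where "c = a + real n * p"
  have c: "0 < c"
    using assms by (simp add: c_def add_pos_nonneg)
  have "(\<Sum>j\<le>n. binomial_weight n p j * (2 / c - (a + real j) / c\<^sup>2))
      = (2 / c - a / c\<^sup>2) * (\<Sum>j\<le>n. binomial_weight n p j)
        - (\<Sum>j\<le>n. binomial_weight n p j * real j) / c\<^sup>2"
    by (simp add: algebra_simps add_divide_distrib sum_subtractf sum.distrib sum_distrib_left sum_divide_distrib)
  also have "\<dots> = (2 * c - (a + real n * p)) / c\<^sup>2"
    unfolding sum_binomial_weight binomial_weight_mean using c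
    by (simp add: field_simps power2_eq_square)
  also have "\<dots> = 1 / c"
    using c by (simp add: c_def[symmetric] power2_eq_square)
  finally have "1 / c = (\<Sum>j\<le>n. binomial_weight n p j * (2 / c - (a + real j) / c\<^sup>2))" ..
  also have "\<dots> \<le> (\<Sum>j\<le>n. binomial_weight n p j * (1 / (a + real j)))"
    using assms c by (intro sum_mono mult_left_mono binomial_weight_nonneg inverse_ge_tangent_line) auto
  finally show ?thesis
    by (simp add: c_def)
qed

lemma min_ge_harmonic_ratio:
  assumes "1 \<le> S"
  shows "real k * real S / (real S + real k - 1) \<le> real (min k S)"
proof (cases "k = 0")
  case False
  then have pos: "0 < real S + real k - 1"
    using assms by simp
  show ?thesis
  proof (cases "k \<le> S")
    case True
    then show ?thesis
      using False pos by (simp add: field_simps min_def)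
  next
    case False
    then have "real k * real S \<le> real S * (real S + real k - 1)"
      using assms by (simp add: algebra_simps)
    then show ?thesis
      using False pos by (simp add: field_simps min_def)
  qed
qed simp

definition expected_min :: "nat \<Rightarrow> nat \<Rightarrow> real \<Rightarrow> real" where
  "expected_min n S p = (\<Sum>k\<le>n. binomial_weight n p k * real (min k S))"

text \<open>Since \<open>min k S \<ge> k S / (S + k - 1)\<close>, size-biasing reduces the claim to a lower bound
  on \<open>E[S / (S + K')]\<close>, which is Jensen's inequality.\<close>
lemma expected_min_ge:
  assumes S: "1 \<le> S" and p: "0 \<le> p" "p \<le> 1"
  shows "real n * p * real S / (real S + real n * p) \<le> expected_min n S p"
proof (cases n)
  case (Suc m)
  define h where "h k = real S / (real S + real k - 1)" for k :: nat
  have pos: "0 < real S + real m * p" "0 < real S + real n * p"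
    using S p by (simp_all add: add_pos_nonneg)
  have "real S / (real S + real n * p) \<le> real S / (real S + real m * p)"
    using Suc p pos by (intro divide_left_mono add_left_mono mult_right_mono mult_pos_pos) auto
  then have "real n * p * (real S / (real S + real n * p)) \<le> real n * p * (real S / (real S + real m * p))"
    using p by (intro mult_left_mono) auto
  then have "real n * p * real S / (real S + real n * p) \<le> real n * p * (real S / (real S + real m * p))"
    by simp
  also have "\<dots> \<le> real n * p * (\<Sum>j\<le>m. binomial_weight m p j * h (Suc j))"
  proof -
    have "real S * (1 / (real S + real m * p))
        \<le> real S * (\<Sum>j\<le>m. binomial_weight m p j / (real S + real j))"
      using binomial_weight_inverse_jensen[of "real S" p m] S p by (intro mult_left_mono) auto
    then show ?thesis
      using p by (intro mult_left_mono) (simp_all add: h_def sum_distrib_left mult.commute)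
  qed
  also have "\<dots> = (\<Sum>k\<le>n. binomial_weight n p k * real k * h k)"
    using Suc binomial_weight_size_bias[of m p h] by simp
  also have "\<dots> \<le> expected_min n S p"
    unfolding expected_min_def
  proof (rule sum_mono)
    fix k
    show "binomial_weight n p k * real k * h k \<le> binomial_weight n p k * real (min k S)"
      using mult_left_mono[OF min_ge_harmonic_ratio[OF S, of k] binomial_weight_nonneg[OF p, of n k]]
      by (simp add: h_def mult.assoc)
  qed
  finally show ?thesis .
qed (simp add: expected_min_def)

lemma expected_min_nonneg: "0 \<le> p \<Longrightarrow> p \<le> 1 \<Longrightarrow> 0 \<le> expected_min n S p"
  unfolding expected_min_def by (intro sum_nonneg mult_nonneg_nonneg binomial_weight_nonneg) auto

lemma expected_min_le_cap:
  assumes "0 \<le> p" "p \<le> 1"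
  shows "expected_min n S p \<le> real S"
proof -
  have "expected_min n S p \<le> (\<Sum>k\<le>n. binomial_weight n p k * real S)"
    unfolding expected_min_def using assms by (intro sum_mono mult_left_mono binomial_weight_nonneg) auto
  then show ?thesis
    by (simp add: sum_distrib_right[symmetric] sum_binomial_weight)
qed

lemma expected_min_le_mean:
  assumes "0 \<le> p" "p \<le> 1"
  shows "expected_min n S p \<le> real n * p"
proof -
  have "expected_min n S p \<le> (\<Sum>k\<le>n. binomial_weight n p k * real k)"
    unfolding expected_min_def using assms by (intro sum_mono mult_left_mono binomial_weight_nonneg) auto
  then show ?thesis
    by (simp add: binomial_weight_mean)
qed

lemma expected_min_gap_ge:
  assumes "0 \<le> p" "p \<le> 1"
  shows "real S * (1 - p) ^ n \<le> real S - expected_min n S p"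
proof -
  have "real S - expected_min n S p = (\<Sum>k\<le>n. binomial_weight n p k * (real S - real (min k S)))"
    unfolding expected_min_def right_diff_distrib sum_subtractf sum_distrib_right[symmetric]
      sum_binomial_weight by simp
  also have "\<dots> \<ge> binomial_weight n p 0 * (real S - real (min 0 S))"
    using assms by (intro member_le_sum mult_nonneg_nonneg binomial_weight_nonneg) auto
  finally show ?thesis
    by (simp add: binomial_weight_def mult.commute)
qed

definition high_bidders :: "nat \<Rightarrow> real \<Rightarrow> (nat \<Rightarrow> real) \<Rightarrow> nat set" where
  "high_bidders N H v = {n\<in>{1..N}. v n = H}"

definition bid_profile :: "nat \<Rightarrow> real \<Rightarrow> real \<Rightarrow> nat set \<Rightarrow> nat \<Rightarrow> real" where
  "bid_profile N L H T = (\<lambda>n. if n \<in> {1..N} then if n \<in> T then H else L else undefined)"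

lemma high_bidders_subset: "high_bidders N H v \<subseteq> {1..N}"
  by (auto simp: high_bidders_def)

lemma card_high_bidders_le: "card (high_bidders N H v) \<le> N"
  using card_mono[OF _ high_bidders_subset] by fastforce

lemma card_low_bidders: "card ({1..N} - high_bidders N H v) = N - card (high_bidders N H v)"
  using card_Diff_subset[OF finite_subset[OF high_bidders_subset] high_bidders_subset] by simp

lemma sum_Pow_card:
  assumes "finite A"
  shows "(\<Sum>T\<in>Pow A. g (card T)) = (\<Sum>k\<le>card A. real (card A choose k) * g k)"
proof -
  have "(\<Sum>T\<in>Pow A. g (card T)) = (\<Sum>k\<le>card A. \<Sum>T\<in>{T\<in>Pow A. card T = k}. g (card T))"
    by (rule sum.group[symmetric]) (use assms in \<open>auto intro: card_mono\<close>)
  also have "\<dots> = (\<Sum>k\<le>card A. real (card A choose k) * g k)"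
  proof (rule sum.cong[OF refl])
    fix k
    have "{T\<in>Pow A. card T = k} = {B. B \<subseteq> A \<and> card B = k}"
      by auto
    then show "(\<Sum>T\<in>{T\<in>Pow A. card T = k}. g (card T)) = real (card A choose k) * g k"
      using n_subsets[OF assms, of k] by simp
  qed
  finally show ?thesis .
qed

lemma vprob_eq_card:
  "vprob N H p v = p ^ card (high_bidders N H v) * (1 - p) ^ (N - card (high_bidders N H v))"
proof -
  have "vprob N H p v = (\<Prod>n\<in>{1..N}. if n \<in> high_bidders N H v then p else 1 - p)"
    unfolding vprob_def high_bidders_def by (rule prod.cong) auto
  also have "\<dots> = (\<Prod>n\<in>{1..N} \<inter> high_bidders N H v. p) * (\<Prod>n\<in>{1..N} - high_bidders N H v. 1 - p)"
    by (simp add: prod.If_cases Diff_eq)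
  also have "\<dots> = p ^ card (high_bidders N H v) * (1 - p) ^ (N - card (high_bidders N H v))"
    using high_bidders_subset[of N H v] card_low_bidders[of N H v] by (simp add: Int_absorb1)
  finally show ?thesis .
qed

lemma expect_card_high_bidders:
  assumes "L \<noteq> H"
  shows "expect N L H p (\<lambda>v. f (card (high_bidders N H v))) = (\<Sum>k\<le>N. binomial_weight N p k * f k)"
proof -
  have "expect N L H p (\<lambda>v. f (card (high_bidders N H v)))
      = (\<Sum>T\<in>Pow {1..N}. p ^ card T * (1 - p) ^ (N - card T) * f (card T))"
    unfolding expect_def
  proof (rule sum.reindex_bij_witness[where i="bid_profile N L H" and j="high_bidders N H"])
    fix v assume v: "v \<in> bids N L H"
    show "bid_profile N L H (high_bidders N H v) = v"
    proof
      fix n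
      show "bid_profile N L H (high_bidders N H v) n = v n"
        using v unfolding bid_profile_def high_bidders_def bids_def by (auto simp: PiE_def extensional_def)
    qed
  next
    fix T assume "T \<in> Pow {1..N}"
    then show "high_bidders N H (bid_profile N L H T) = T"
      using assms unfolding high_bidders_def bid_profile_def by auto
    show "bid_profile N L H T \<in> bids N L H"
      by (auto simp: bid_profile_def bids_def)
  next
    fix v
    show "high_bidders N H v \<in> Pow {1..N}"
      using high_bidders_subset by blast
    show "p ^ card (high_bidders N H v) * (1 - p) ^ (N - card (high_bidders N H v))
        * f (card (high_bidders N H v)) = vprob N H p v * f (card (high_bidders N H v))"
      by (simp add: vprob_eq_card)
  qed
  also have "\<dots> = (\<Sum>k\<le>N. binomial_weight N p k * f k)"
    using sum_Pow_card[of "{1..N}" "\<lambda>k. p ^ k * (1 - p) ^ (N - k) * f k"]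
    by (simp add: binomial_weight_def mult.assoc)
  finally show ?thesis .
qed

lemma finite_feas: "finite (feas N S)"
  by (rule finite_subset[of _ "Pow {1..N}"]) (auto simp: feas_def)

lemma expect_cong: "(\<And>v. v \<in> bids N L H \<Longrightarrow> f v = g v) \<Longrightarrow> expect N L H p f = expect N L H p g"
  unfolding expect_def by (rule sum.cong) auto

lemma welfare_eq_expect_allocated_value:
  "welfare N S L H p \<pi> = expect N L H p (\<lambda>v. \<Sum>A\<in>feas N S. \<pi> v A * (\<Sum>n\<in>A. v n))"
  unfolding welfare_def
proof (rule expect_cong)
  fix v
  have "(\<Sum>n\<in>{1..N}. Qn N S \<pi> n v * v n)
      = (\<Sum>n\<in>{1..N}. \<Sum>A\<in>feas N S. if n \<in> A then \<pi> v A * v n else 0)"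
    unfolding Qn_def
    by (simp add: sum_distrib_right sum.inter_filter[OF finite_feas, symmetric] if_distrib cong: if_cong)
  also have "\<dots> = (\<Sum>A\<in>feas N S. \<Sum>n\<in>{1..N}. if n \<in> A then \<pi> v A * v n else 0)"
    by (rule sum.swap)
  also have "\<dots> = (\<Sum>A\<in>feas N S. \<pi> v A * (\<Sum>n\<in>A. v n))"
  proof (rule sum.cong[OF refl])
    fix A assume "A \<in> feas N S"
    then have "{1..N} \<inter> A = A"
      by (auto simp: feas_def)
    then show "(\<Sum>n\<in>{1..N}. if n \<in> A then \<pi> v A * v n else 0) = \<pi> v A * (\<Sum>n\<in>A. v n)"
      by (simp add: sum.inter_filter[symmetric] sum_distrib_left Int_def)
  qed
  finally show "(\<Sum>n\<in>{1..N}. Qn N S \<pi> n v * v n) = (\<Sum>A\<in>feas N S. \<pi> v A * (\<Sum>n\<in>A. v n))" .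
qed

definition point_alloc :: "((nat \<Rightarrow> real) \<Rightarrow> nat set) \<Rightarrow> (nat \<Rightarrow> real) \<Rightarrow> nat set \<Rightarrow> real" where
  "point_alloc A v B = (if B = A v then 1 else 0)"

lemma sum_point_alloc:
  assumes "A v \<in> feas N S"
  shows "(\<Sum>B\<in>feas N S. point_alloc A v B * g B) = g (A v)"
proof -
  have "(\<Sum>B\<in>feas N S. point_alloc A v B * g B) = (\<Sum>B\<in>feas N S. if B = A v then g B else 0)"
    by (rule sum.cong) (auto simp: point_alloc_def)
  then show ?thesis
    using finite_feas[of N S] assms by (simp add: sum.delta)
qed

lemma optimal_point_alloc:
  assumes "\<And>v. v \<in> bids N L H \<Longrightarrow> A v \<in> feas N S"
    and "\<And>v B. v \<in> bids N L H \<Longrightarrow> B \<in> feas N S \<Longrightarrow>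
           (\<Sum>n\<in>B. vval L H p (v n)) \<le> (\<Sum>n\<in>A v. vval L H p (v n))"
  shows "optimal N S L H p (point_alloc A)"
  using assms finite_feas[of N S]
  by (auto simp: optimal_def is_alloc_def point_alloc_def sum.delta split: if_splits)

lemma welfare_point_alloc:
  assumes "\<And>v. v \<in> bids N L H \<Longrightarrow> A v \<in> feas N S"
  shows "welfare N S L H p (point_alloc A) = expect N L H p (\<lambda>v. \<Sum>n\<in>A v. v n)"
  unfolding welfare_eq_expect_allocated_value
  by (rule expect_cong) (use assms sum_point_alloc in blast)

lemma sum_bids_split:
  assumes v: "v \<in> bids N L H" and B: "B \<subseteq> {1..N}"
  shows "(\<Sum>n\<in>B. g (v n))
    = g H * real (card (B \<inter> high_bidders N H v)) + g L * real (card (B - high_bidders N H v))"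
proof -
  have fin: "finite B"
    using B finite_subset by blast
  have low: "v n = L" if "n \<in> B - high_bidders N H v" for n
  proof -
    have "n \<in> {1..N}"
      using that B by blast
    then show ?thesis
      using that v by (auto simp: bids_def PiE_iff high_bidders_def)
  qed
  have "(\<Sum>n\<in>B. g (v n)) = (\<Sum>n\<in>B \<inter> high_bidders N H v. g (v n)) + (\<Sum>n\<in>B - high_bidders N H v. g (v n))"
    using fin by (rule sum.Int_Diff)
  also have "\<dots> = (\<Sum>n\<in>B \<inter> high_bidders N H v. g H) + (\<Sum>n\<in>B - high_bidders N H v. g L)"
    using low by (auto simp: high_bidders_def intro!: arg_cong2[where f="(+)"] sum.cong)
  finally show ?thesis
    by simp
qed

definition capped_high :: "nat \<Rightarrow> nat \<Rightarrow> real \<Rightarrow> (nat \<Rightarrow> real) \<Rightarrow> nat" where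
  "capped_high N S H v = min (card (high_bidders N H v)) S"

lemma feas_card_high_le:
  assumes "B \<in> feas N S"
  shows "card (B \<inter> high_bidders N H v) \<le> capped_high N S H v"
proof -
  have "finite B" "card B \<le> S"
    using assms finite_subset[of B "{1..N}"] by (auto simp: feas_def)
  moreover have "card (B \<inter> high_bidders N H v) \<le> card (high_bidders N H v)"
    using finite_subset[OF high_bidders_subset] by (intro card_mono) auto
  ultimately show ?thesis
    using card_mono[of B "B \<inter> high_bidders N H v"] by (auto simp: capped_high_def)
qed

lemma feas_card_split_le:
  assumes "B \<in> feas N S"
  shows "card (B \<inter> high_bidders N H v) + card (B - high_bidders N H v) \<le> S"
  using assms finite_subset[of B "{1..N}"] card_Int_Diff[of B "high_bidders N H v"]
  by (auto simp: feas_def)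

lemma sum_feas_le_capped:
  assumes v: "v \<in> bids N L H" and B: "B \<in> feas N S" and g: "g L \<le> g H" "0 \<le> g L"
  shows "(\<Sum>n\<in>B. g (v n)) \<le> g H * real (capped_high N S H v) + g L * (real S - real (capped_high N S H v))"
proof -
  define h l m where "h = real (card (B \<inter> high_bidders N H v))"
    and "l = real (card (B - high_bidders N H v))" and "m = real (capped_high N S H v)"
  have hm: "h \<le> m" and hl: "h + l \<le> real S"
    using feas_card_high_le[OF B, of H v] feas_card_split_le[OF B, of H v]
    unfolding h_def l_def m_def by linarith+
  have "g H * h + g L * l \<le> g H * h + g L * (real S - h)"
    using hl g by (intro add_left_mono mult_left_mono) auto
  also have "\<dots> \<le> g H * m + g L * (real S - m)"
    using mult_left_mono[OF hm, of "g H - g L"] g by (simp add: algebra_simps)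
  finally show ?thesis
    using sum_bids_split[OF v, of B g] B by (simp add: feas_def h_def l_def m_def)
qed

lemma sum_feas_le_high:
  assumes v: "v \<in> bids N L H" and B: "B \<in> feas N S" and g: "g L < 0" "0 \<le> g H"
  shows "(\<Sum>n\<in>B. g (v n)) \<le> g H * real (capped_high N S H v)"
    and "(\<Sum>n\<in>B. g (v n)) = g H * real (capped_high N S H v) \<Longrightarrow> 0 < g H \<Longrightarrow>
         (\<Sum>n\<in>B. v n) = H * real (capped_high N S H v)"
proof -
  have split: "(\<Sum>n\<in>B. f (v n))
      = f H * real (card (B \<inter> high_bidders N H v)) + f L * real (card (B - high_bidders N H v))" for f
    using sum_bids_split[OF v] B by (simp add: feas_def)
  have low: "g L * real (card (B - high_bidders N H v)) \<le> 0"
    using g by (simp add: mult_nonpos_nonneg)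
  have high: "g H * real (card (B \<inter> high_bidders N H v)) \<le> g H * real (capped_high N S H v)"
    using feas_card_high_le[OF B, of H v] g by (intro mult_left_mono) auto
  show "(\<Sum>n\<in>B. g (v n)) \<le> g H * real (capped_high N S H v)"
    unfolding split using low high by linarith
  assume eq: "(\<Sum>n\<in>B. g (v n)) = g H * real (capped_high N S H v)" and gH: "0 < g H"
  then have "g L * real (card (B - high_bidders N H v)) = 0"
    and "g H * real (card (B \<inter> high_bidders N H v)) = g H * real (capped_high N S H v)"
    using low high unfolding split by linarith+
  then show "(\<Sum>n\<in>B. v n) = H * real (capped_high N S H v)"
    using split[of "\<lambda>x. x"] g gH by simp
qed

definition high_winners :: "nat \<Rightarrow> nat \<Rightarrow> real \<Rightarrow> (nat \<Rightarrow> real) \<Rightarrow> nat set" where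
  "high_winners N S H v = (SOME A. A \<subseteq> high_bidders N H v \<and> card A = capped_high N S H v)"

definition low_fillers :: "nat \<Rightarrow> nat \<Rightarrow> real \<Rightarrow> (nat \<Rightarrow> real) \<Rightarrow> nat set" where
  "low_fillers N S H v =
     (SOME A. A \<subseteq> {1..N} - high_bidders N H v \<and> card A = S - capped_high N S H v)"

definition efficient_set :: "nat \<Rightarrow> nat \<Rightarrow> real \<Rightarrow> (nat \<Rightarrow> real) \<Rightarrow> nat set" where
  "efficient_set N S H v = high_winners N S H v \<union> low_fillers N S H v"

lemma high_winners_spec:
  "high_winners N S H v \<subseteq> high_bidders N H v \<and> card (high_winners N S H v) = capped_high N S H v"
proof -
  have "capped_high N S H v \<le> card (high_bidders N H v)"
    by (simp add: capped_high_def)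
  then obtain T where "T \<subseteq> high_bidders N H v" "card T = capped_high N S H v"
    by (rule obtain_subset_with_card_n)
  then show ?thesis
    unfolding high_winners_def by (rule someI[of "\<lambda>A. _ A \<and> _ A", OF conjI])
qed

lemma low_fillers_spec:
  assumes "S \<le> N"
  shows "low_fillers N S H v \<subseteq> {1..N} - high_bidders N H v
    \<and> card (low_fillers N S H v) = S - capped_high N S H v"
proof -
  have "S - capped_high N S H v \<le> card ({1..N} - high_bidders N H v)"
    using assms card_high_bidders_le[of N H v] card_low_bidders[of N H v] by (simp add: capped_high_def)
  then obtain T where "T \<subseteq> {1..N} - high_bidders N H v" "card T = S - capped_high N S H v"
    by (rule obtain_subset_with_card_n)
  then show ?thesis
    unfolding low_fillers_def by (rule someI[of "\<lambda>A. _ A \<and> _ A", OF conjI])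
qed

lemma high_winners_feas: "high_winners N S H v \<in> feas N S"
  using high_winners_spec[of N S H v] high_bidders_subset[of N H v]
  by (auto simp: feas_def capped_high_def)

lemma efficient_set_feas:
  assumes "S \<le> N"
  shows "efficient_set N S H v \<in> feas N S"
proof -
  note hw = high_winners_spec[of N S H v] and lf = low_fillers_spec[OF assms, of H v]
  have "finite (high_winners N S H v)" "finite (low_fillers N S H v)"
    using hw lf high_bidders_subset[of N H v] by (auto intro: finite_subset)
  moreover have "high_winners N S H v \<inter> low_fillers N S H v = {}"
    using hw lf by auto
  ultimately have "card (efficient_set N S H v) = S"
    using hw lf by (simp add: efficient_set_def card_Un_disjoint capped_high_def)
  then show ?thesis
    using hw lf high_bidders_subset[of N H v] by (auto simp: feas_def efficient_set_def)
qed

lemma sum_high_winners: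
  assumes "v \<in> bids N L H"
  shows "(\<Sum>n\<in>high_winners N S H v. g (v n)) = g H * real (capped_high N S H v)"
proof -
  have parts: "high_winners N S H v \<inter> high_bidders N H v = high_winners N S H v"
    "high_winners N S H v - high_bidders N H v = {}"
    using high_winners_spec[of N S H v] by auto
  have "high_winners N S H v \<subseteq> {1..N}"
    using high_winners_feas[of N S H v] by (simp add: feas_def)
  from sum_bids_split[OF assms this, of g, unfolded parts] show ?thesis
    using high_winners_spec[of N S H v] by simp
qed

lemma sum_efficient_set:
  assumes "S \<le> N" "v \<in> bids N L H"
  shows "(\<Sum>n\<in>efficient_set N S H v. g (v n))
    = g H * real (capped_high N S H v) + g L * (real S - real (capped_high N S H v))"
proof -
  note hw = high_winners_spec[of N S H v] and lf = low_fillers_spec[OF assms(1), of H v]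
  have parts: "efficient_set N S H v \<inter> high_bidders N H v = high_winners N S H v"
    "efficient_set N S H v - high_bidders N H v = low_fillers N S H v"
    using hw lf by (auto simp: efficient_set_def)
  have "efficient_set N S H v \<subseteq> {1..N}"
    using efficient_set_feas[OF assms(1)] by (simp add: feas_def)
  from sum_bids_split[OF assms(2) this, of g, unfolded parts] show ?thesis
    using hw lf by (simp add: of_nat_diff capped_high_def)
qed

lemma Max_sum_feas:
  assumes "S \<le> N" "v \<in> bids N L H" "0 \<le> L" "L \<le> H"
  shows "Max ((\<lambda>A. \<Sum>n\<in>A. v n) ` feas N S)
    = H * real (capped_high N S H v) + L * (real S - real (capped_high N S H v))"
proof (rule Max_eqI)
  show "finite ((\<lambda>A. \<Sum>n\<in>A. v n) ` feas N S)"
    using finite_feas by simp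
  show "H * real (capped_high N S H v) + L * (real S - real (capped_high N S H v))
      \<in> (\<lambda>A. \<Sum>n\<in>A. v n) ` feas N S"
    using sum_efficient_set[OF assms(1,2), of "\<lambda>x. x"] efficient_set_feas[OF assms(1)]
    by (intro image_eqI[where x="efficient_set N S H v"]) auto
qed (use sum_feas_le_capped[OF assms(2), of _ S "\<lambda>x. x"] assms in auto)

lemma ratio_to_sum_mono:
  fixes x X y Y :: real
  assumes "0 < x" "x \<le> X" "0 \<le> Y" "Y \<le> y"
  shows "x / (y + x) \<le> X / (Y + X)"
proof -
  have "x * Y \<le> X * y"
    using assms by (intro mult_mono) auto
  then show ?thesis
    using assms by (simp add: field_simps)
qed

locale two_value_auction =
  fixes N S :: nat and L H p :: real
  assumes S_pos: "1 \<le> S" and S_le_N: "S \<le> N" and L_pos: "0 < L" and L_less_H: "L < H"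
    and p_pos: "0 < p" and p_less_1: "p < 1"
begin

lemma expect_capped_high:
  "expect N L H p (\<lambda>v. f (capped_high N S H v)) = (\<Sum>k\<le>N. binomial_weight N p k * f (min k S))"
  using expect_card_high_bidders[of L H N p "\<lambda>k. f (min k S)"] L_less_H by (simp add: capped_high_def)

lemma efficient_value_eq_Max:
  "v \<in> bids N L H \<Longrightarrow> H * real (capped_high N S H v) + L * (real S - real (capped_high N S H v))
     = Max ((\<lambda>A. \<Sum>n\<in>A. v n) ` feas N S)"
  using Max_sum_feas[OF S_le_N, of v L H] L_pos L_less_H by simp

lemma MSW_eq: "MSW N S L H p = H * expected_min N S p + L * (real S - expected_min N S p)"
proof -
  have "MSW N S L H p
      = expect N L H p (\<lambda>v. H * real (capped_high N S H v) + L * (real S - real (capped_high N S H v)))"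
    unfolding MSW_def by (rule expect_cong) (simp add: efficient_value_eq_Max)
  also have "\<dots> = (\<Sum>k\<le>N. binomial_weight N p k * (H * real (min k S) + L * (real S - real (min k S))))"
    by (rule expect_capped_high)
  also have "\<dots> = (H - L) * expected_min N S p + L * real S * (\<Sum>k\<le>N. binomial_weight N p k)"
    unfolding expected_min_def by (simp add: algebra_simps sum.distrib sum_distrib_left sum_subtractf)
  finally show ?thesis
    by (simp add: sum_binomial_weight algebra_simps)
qed

lemma MSW_pos: "0 < MSW N S L H p"
proof -
  have "L * expected_min N S p \<le> H * expected_min N S p"
    using L_less_H expected_min_nonneg[of p N S] p_pos p_less_1 by (intro mult_right_mono) auto
  then have "L * real S \<le> MSW N S L H p"
    unfolding MSW_eq by (simp add: algebra_simps)
  moreover have "0 < L * real S"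
    using L_pos S_pos by simp
  ultimately show ?thesis
    by linarith
qed

lemma vval_H: "vval L H p H = H"
  by (simp add: vval_def)

lemma vval_L: "vval L H p L = (L - p * H) / (1 - p)"
  using L_less_H by (simp add: vval_def)

lemma ELR_nonpos_if_efficient_optimal:
  assumes "p * H \<le> L" and "welfare_max_optimal N S L H p \<pi>"
  shows "ELR N S L H p \<pi> \<le> 0"
proof -
  have vval_mono: "vval L H p L \<le> vval L H p H" "0 \<le> vval L H p L"
    unfolding vval_L vval_H using assms(1) p_less_1 L_less_H by (simp_all add: field_simps)
  have "optimal N S L H p (point_alloc (efficient_set N S H))"
    using efficient_set_feas[OF S_le_N]
      sum_feas_le_capped[where g="vval L H p", OF _ _ vval_mono]
      sum_efficient_set[OF S_le_N, where g="vval L H p"]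
    by (intro optimal_point_alloc) auto
  then have "welfare N S L H p (point_alloc (efficient_set N S H)) \<le> welfare N S L H p \<pi>"
    using assms(2) by (simp add: welfare_max_optimal_def)
  moreover have "welfare N S L H p (point_alloc (efficient_set N S H)) = MSW N S L H p"
    unfolding welfare_point_alloc[OF efficient_set_feas[OF S_le_N]] MSW_def
    by (rule expect_cong) (simp add: sum_efficient_set[OF S_le_N, where g="\<lambda>x. x"] efficient_value_eq_Max)
  ultimately show ?thesis
    unfolding ELR_def using MSW_pos by (simp add: divide_nonpos_pos)
qed

context
  assumes low_virtual_neg: "L < p * H"
begin

lemma vval_signs: "vval L H p L < 0" "0 < vval L H p H"
  unfolding vval_L vval_H using low_virtual_neg p_less_1 L_less_H L_pos by (simp_all add: field_simps)

lemma high_winners_optimal: "optimal N S L H p (point_alloc (high_winners N S H))"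
  using high_winners_feas sum_feas_le_high(1)[where g="vval L H p"] vval_signs
    sum_high_winners[where S=S and g="vval L H p"]
  by (intro optimal_point_alloc) (auto simp: less_imp_le)

text \<open>A negative virtual value for \<open>L\<close> forbids selling to low bidders, so every optimal
  rule sells to exactly \<open>min K S\<close> high bidders.\<close>
lemma optimal_allocated_value:
  assumes "optimal N S L H p \<pi>" "v \<in> bids N L H" "A \<in> feas N S" "\<pi> v A \<noteq> 0"
  shows "(\<Sum>n\<in>A. v n) = H * real (capped_high N S H v)"
proof -
  have "(\<Sum>n\<in>high_winners N S H v. vval L H p (v n)) \<le> (\<Sum>n\<in>A. vval L H p (v n))"
    using assms high_winners_feas unfolding optimal_def by blast
  then have "(\<Sum>n\<in>A. vval L H p (v n)) = vval L H p H * real (capped_high N S H v)"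
    using sum_feas_le_high(1)[OF assms(2,3), of "vval L H p"] vval_signs
      sum_high_winners[OF assms(2), where S=S and g="vval L H p"] by simp
  then show ?thesis
    using sum_feas_le_high(2)[OF assms(2,3)] vval_signs by simp
qed

lemma welfare_optimal:
  assumes "optimal N S L H p \<pi>"
  shows "welfare N S L H p \<pi> = H * expected_min N S p"
proof -
  have "welfare N S L H p \<pi> = expect N L H p (\<lambda>v. H * real (capped_high N S H v))"
    unfolding welfare_eq_expect_allocated_value
  proof (rule expect_cong)
    fix v assume v: "v \<in> bids N L H"
    have "(\<Sum>A\<in>feas N S. \<pi> v A * (\<Sum>n\<in>A. v n))
        = (\<Sum>A\<in>feas N S. \<pi> v A * (H * real (capped_high N S H v)))"
      using optimal_allocated_value[OF assms v] by (intro sum.cong) auto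
    also have "\<dots> = H * real (capped_high N S H v)"
      using assms v by (simp add: optimal_def is_alloc_def sum_distrib_right[symmetric])
    finally show "(\<Sum>A\<in>feas N S. \<pi> v A * (\<Sum>n\<in>A. v n)) = H * real (capped_high N S H v)" .
  qed
  also have "\<dots> = H * expected_min N S p"
    using expect_capped_high[of "\<lambda>k. H * real k"]
    by (simp add: expected_min_def sum_distrib_left ac_simps)
  finally show ?thesis .
qed

lemma welfare_max_optimal_high_winners:
  "welfare_max_optimal N S L H p (point_alloc (high_winners N S H))"
  using high_winners_optimal welfare_optimal by (simp add: welfare_max_optimal_def)

lemma ELR_optimal:
  assumes "optimal N S L H p \<pi>"
  shows "ELR N S L H p \<pi>
    = L * (real S - expected_min N S p) / (H * expected_min N S p + L * (real S - expected_min N S p))"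
  unfolding ELR_def welfare_optimal[OF assms] MSW_eq by simp

end

lemma ELR_welfare_max_optimal_le:
  assumes "welfare_max_optimal N S L H p \<pi>"
  shows "ELR N S L H p \<pi> \<le> real S / (real S + real N)"
proof (cases "p * H \<le> L")
  case True
  have "0 \<le> real S / (real S + real N)"
    by simp
  then show ?thesis
    using ELR_nonpos_if_efficient_optimal[OF True assms] by linarith
next
  case False
  define M where "M = expected_min N S p"
  have M: "0 \<le> M" "M \<le> real S" "real N * p * real S / (real S + real N * p) \<le> M"
    unfolding M_def using expected_min_nonneg expected_min_le_cap expected_min_ge[OF S_pos] p_pos p_less_1
    by auto
  have "real N * p * real S \<le> M * (real S + real N * p)"
    using M(3) S_pos p_pos by (simp add: field_simps add_pos_nonneg)
  then have "real N * p * (real S - M) \<le> real S * M"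
    by (simp add: algebra_simps)
  text \<open>Here \<open>L < p H\<close> converts the bound on \<open>M\<close> into a bound on the lost welfare.\<close>
  then have "real N * L * (real S - M) \<le> H * (real S * M)"
  proof -
    assume bound: "real N * p * (real S - M) \<le> real S * M"
    have "real N * L * (real S - M) \<le> real N * (p * H) * (real S - M)"
      using False M(2) by (intro mult_right_mono mult_left_mono) auto
    also have "\<dots> = H * (real N * p * (real S - M))"
      by (simp add: algebra_simps)
    also have "\<dots> \<le> H * (real S * M)"
      using bound L_pos L_less_H by (intro mult_left_mono) auto
    finally show ?thesis .
  qed
  moreover have "0 < H * M + L * (real S - M)"
    using MSW_pos by (simp add: MSW_eq M_def)
  ultimately have "L * (real S - M) / (H * M + L * (real S - M)) \<le> real S / (real S + real N)"
    using S_pos by (simp add: field_simps)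
  then show ?thesis
    using ELR_optimal[of \<pi>] False assms by (simp add: welfare_max_optimal_def M_def)
qed

lemma ELR_optimal_ge:
  assumes "L < p * H" "optimal N S L H p \<pi>"
  shows "L * real S * (1 - p) ^ N / (H * real N * p + L * real S * (1 - p) ^ N) \<le> ELR N S L H p \<pi>"
proof -
  define M where "M = expected_min N S p"
  have M: "M \<le> real N * p" "real S * (1 - p) ^ N \<le> real S - M" "0 \<le> M"
    unfolding M_def using expected_min_le_mean expected_min_gap_ge expected_min_nonneg p_pos p_less_1
    by auto
  have "L * real S * (1 - p) ^ N / (H * real N * p + L * real S * (1 - p) ^ N)
      \<le> L * (real S - M) / (H * M + L * (real S - M))"
    using M L_pos L_less_H S_pos p_less_1
    by (intro ratio_to_sum_mono) (auto simp: mult.assoc intro!: mult_left_mono)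
  then show ?thesis
    using ELR_optimal[OF assms] by (simp add: M_def)
qed

end

lemma Sup_ge_tendsto:
  fixes X :: "real set"
  assumes "bdd_above X" "(g \<longlongrightarrow> b) F" "F \<noteq> bot" "\<forall>\<^sub>F t in F. \<exists>x\<in>X. g t \<le> x"
  shows "b \<le> Sup X"
proof (rule tendsto_le[OF _ tendsto_const assms(2)])
  show "\<forall>\<^sub>F t in F. g t \<le> Sup X"
    using assms(4) by eventually_elim (use cSup_upper[OF _ assms(1)] in force)
qed (use assms(3) in simp)

text \<open>The extremal instances: \<open>L = 1\<close>, \<open>H = 1 + 1/p\<close> with \<open>p \<rightarrow> 0\<close>, where almost surely
  nobody bids high, yet the optimal mechanism withholds every item from the low bidders.\<close>
lemma extremal_instance:
  assumes "1 \<le> S" "S \<le> N" "0 < p" "p < 1"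
  shows "welfare_max_optimal N S 1 (1 + 1 / p) p (point_alloc (high_winners N S (1 + 1 / p)))"
    and "real S * (1 - p) ^ N / ((1 + p) * real N + real S * (1 - p) ^ N)
      \<le> ELR N S 1 (1 + 1 / p) p (point_alloc (high_winners N S (1 + 1 / p)))"
proof -
  interpret two_value_auction N S 1 "1 + 1 / p" p
    using assms by unfold_locales auto
  have neg: "1 < p * (1 + 1 / p)"
    using assms by (simp add: field_simps)
  show wmo: "welfare_max_optimal N S 1 (1 + 1 / p) p (point_alloc (high_winners N S (1 + 1 / p)))"
    by (rule welfare_max_optimal_high_winners[OF neg])
  have "1 * real S * (1 - p) ^ N / ((1 + 1 / p) * real N * p + 1 * real S * (1 - p) ^ N)
      \<le> ELR N S 1 (1 + 1 / p) p (point_alloc (high_winners N S (1 + 1 / p)))"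
    using wmo by (intro ELR_optimal_ge[OF neg]) (simp add: welfare_max_optimal_def)
  moreover have "(1 + 1 / p) * real N * p = (1 + p) * real N"
    using assms by (simp add: field_simps)
  ultimately show "real S * (1 - p) ^ N / ((1 + p) * real N + real S * (1 - p) ^ N)
      \<le> ELR N S 1 (1 + 1 / p) p (point_alloc (high_winners N S (1 + 1 / p)))"
    by simp
qed

lemma extremal_ratio_tendsto:
  assumes "1 \<le> S"
  shows "((\<lambda>p. real S * (1 - p) ^ N / ((1 + p) * real N + real S * (1 - p) ^ N))
    \<longlongrightarrow> real S / (real S + real N)) (at_right 0)"
proof -
  have "((\<lambda>p. real S * (1 - p) ^ N / ((1 + p) * real N + real S * (1 - p) ^ N))
    \<longlongrightarrow> real S * (1 - 0) ^ N / ((1 + 0) * real N + real S * (1 - 0) ^ N)) (at_right 0)"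
    using assms by (intro tendsto_intros) (auto simp: add_pos_nonneg)
  then show ?thesis
    by (simp add: add.commute)
qed

lemma share_le_Sup_extremal:
  assumes "1 \<le> S" "S \<le> N" "bdd_above X"
    and "\<And>q. 0 < q \<Longrightarrow> q < 1 \<Longrightarrow>
           ELR N S 1 (1 + 1 / q) q (point_alloc (high_winners N S (1 + 1 / q))) \<in> X"
  shows "real S / (real S + real N) \<le> Sup X"
proof (rule Sup_ge_tendsto[OF assms(3) extremal_ratio_tendsto[OF assms(1)]])
  show "\<forall>\<^sub>F q in at_right 0. \<exists>x\<in>X. real S * (1 - q) ^ N / ((1 + q) * real N + real S * (1 - q) ^ N) \<le> x"
    using eventually_at_right_real[OF zero_less_one]
  proof eventually_elim
    case (elim q)
    then have q: "0 < q" "q < 1"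
      by auto
    show ?case
      using extremal_instance(2)[OF assms(1,2) q] assms(4)[OF q] by (rule bexI)
  qed
qed simp

theorem proposition4:
  fixes N S :: nat and r :: real
  assumes "1 \<le> S" and "S \<le> N" and "r > 1"
  shows "Sup {ELR N S L H p \<pi> | L H p \<pi>.
            0 < L \<and> L < H \<and> H \<le> r * L \<and> 0 < p \<and> p < 1 \<and> welfare_max_optimal N S L H p \<pi>}
           \<le> real S / (real S + real N) \<and>
         Sup {ELR N S L H p \<pi> | L H p \<pi>.
            0 < L \<and> L < H \<and> 0 < p \<and> p < 1 \<and> welfare_max_optimal N S L H p \<pi>}
           = real S / (real S + real N)"
    (is "Sup ?bounded \<le> ?share \<and> Sup ?all = ?share")
proof -
  have le_share: "x \<le> ?share" if "x \<in> ?all" for x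
    using that assms two_value_auction.ELR_welfare_max_optimal_le[OF two_value_auction.intro] by auto
  define p where "p = (1 + 1 / r) / 2"
  have p: "0 < p" "p < 1" "1 < p * r"
    using assms(3) by (auto simp: p_def field_simps)
  then have "welfare_max_optimal N S 1 r p (point_alloc (high_winners N S r))"
    using assms two_value_auction.welfare_max_optimal_high_winners[OF two_value_auction.intro] by simp
  then have "ELR N S 1 r p (point_alloc (high_winners N S r)) \<in> ?bounded"
    by (intro CollectI exI[of _ "1::real"] exI[of _ r] exI[of _ p] exI[of _ "point_alloc (high_winners N S r)"])
      (use p assms(3) in simp)
  then have nonempty: "?bounded \<noteq> {}" "?all \<noteq> {}"
    by blast+
  have "?share \<le> Sup ?all"
  proof (rule share_le_Sup_extremal[OF assms(1,2) bdd_aboveI[OF le_share]])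
    fix q :: real assume q: "0 < q" "q < 1"
    then have "1 < 1 + 1 / q"
      by simp
    with q zero_less_one extremal_instance(1)[OF assms(1,2) q]
    show "ELR N S 1 (1 + 1 / q) q (point_alloc (high_winners N S (1 + 1 / q))) \<in> ?all"
      by blast
  qed
  moreover have "Sup ?all \<le> ?share"
    using nonempty(2) le_share by (rule cSup_least)
  moreover have "Sup ?bounded \<le> ?share"
    using nonempty(1) le_share by (rule cSup_least) blast
  ultimately show ?thesis
    by simp
qed
end
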